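(* Let $k\ge2$, $n\ge1$ be integers, let $\bar{\mathcal{P}}\in\mathbb{R}^{[k,n]}$ be a columnwise-substochastic tensor, $\mathbf{v}\in\mathbb{R}^n$ a stochastic vector and $\alpha\in[0,1)$ with $\varsigma:=(2k-3)\alpha(1-\alpha)^{-\frac{k-2}{k-1}}<1$. Choose $\mathbf{y}_0\in\mathbb{R}^n_+$ with $\mathbf{e}^T\mathbf{y}_0\le(1-\alpha)^{-\frac{1}{k-1}}$ and define iteratively, for $c=0,1,2,\dots$, $\mathbf{z}_c:=\alpha\bar{\mathcal{P}}\mathbf{y}_c^{k-1}+\mathbf{v}$ and $\mathbf{y}_{c+1}:=(\mathbf{e}^T\mathbf{z}_c)^{-\frac{k-2}{k-1}}\mathbf{z}_c$ (the tensor splitting algorithm). Then the sequence $\{\mathbf{y}_c\}$ converges globally to a nonnegative solution $\mathbf{y}_*$ of the MLPPR system $(\mathbf{e}^T\mathbf{y})^{k-2}\mathbf{y}-\alpha\bar{\mathcal{P}}\mathbf{y}^{k-1}=\mathbf{v}$ with a linear rate, namely $$\|\mathbf{y}_c-\mathbf{y}_*\|_1\le\varsigma^c\|\mathbf{y}_0-\mathbf{y}_*\|_1\quad\text{for all }c\ge0.$$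
   Context: For $\mathcal{P}\in\mathbb{R}^{[k,n]}$ (real tensors of order $k$, dimension $n$) and $\mathbf{y}\in\mathbb{R}^n$, $(\mathcal{P}\mathbf{y}^{k-1})_i=\sum_{i_2,\dots,i_k}p_{i i_2\dots i_k}y_{i_2}\cdots y_{i_k}$. $\bar{\mathcal{P}}$ is columnwise-substochastic if its entries are nonnegative and $\sum_{i}\bar p_{i i_2\dots i_k}\le1$ for all $i_2,\dots,i_k$. $\mathbf{e}$ is the all-ones vector; a stochastic vector is nonnegative with entries summing to $1$. The MLPPR system $(I\circ\mathbf{e}^{\circ(k-2)}-\alpha\bar{\mathcal{P}})\mathbf{y}^{k-1}=\mathbf{v}$ is exactly $(\mathbf{e}^T\mathbf{y})^{k-2}\mathbf{y}-\alpha\bar{\mathcal{P}}\mathbf{y}^{k-1}=\mathbf{v}$. *)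

theory Defs
  imports "HOL-Analysis.Analysis"
begin

text \<open>A real tensor of order k and dimension n is represented with the index type 'n
  (n = CARD('n)): P i [i2,...,ik] is the entry p_{i i2 ... ik}; only lists of length k-1 matter.\<close>

definition tensor_apply :: "('n::finite \<Rightarrow> 'n list \<Rightarrow> real) \<Rightarrow> nat \<Rightarrow> ('n \<Rightarrow> real) \<Rightarrow> 'n \<Rightarrow> real"
  where "tensor_apply P k y i =
    (\<Sum>xs\<in>{xs :: 'n list. length xs = k - 1}. P i xs * prod_list (map y xs))"

definition colwise_substochastic :: "('n::finite \<Rightarrow> 'n list \<Rightarrow> real) \<Rightarrow> nat \<Rightarrow> bool"
  where "colwise_substochastic P k \<longleftrightarrow>
    (\<forall>i xs. length xs = k - 1 \<longrightarrow> 0 \<le> P i xs) \<and>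
    (\<forall>xs. length xs = k - 1 \<longrightarrow> (\<Sum>i\<in>UNIV. P i xs) \<le> 1)"

definition stochastic_vec :: "('n::finite \<Rightarrow> real) \<Rightarrow> bool"
  where "stochastic_vec v \<longleftrightarrow> (\<forall>i. 0 \<le> v i) \<and> (\<Sum>i\<in>UNIV. v i) = 1"

definition esum :: "('n::finite \<Rightarrow> real) \<Rightarrow> real"
  where "esum y = (\<Sum>i\<in>UNIV. y i)"

definition norm1 :: "('n::finite \<Rightarrow> real) \<Rightarrow> real"
  where "norm1 y = (\<Sum>i\<in>UNIV. \<bar>y i\<bar>)"

end

theory Submission
  imports Defs
begin

text \<open>Write \<open>b = (k - 2) / (k - 1)\<close>, \<open>R = (1 - \<alpha>) powr (- 1 / (k - 1))\<close> and
  \<open>T y = (e\<^sup>T z) powr (- b) \<cdot> z\<close> with \<open>z = \<alpha> \<P> y\<^sup>k\<^sup>-\<^sup>1 + v\<close>, so that \<open>y\<^sub>c\<^sub>+\<^sub>1 = T y\<^sub>c\<close>.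
  On \<open>D = {y \<ge> 0, e\<^sup>T y \<le> R}\<close> we have \<open>1 \<le> e\<^sup>T z \<le> \<alpha> R\<^sup>k\<^sup>-\<^sup>1 + 1 = 1 / (1 - \<alpha>)\<close> and
  \<open>e\<^sup>T (T y) = (e\<^sup>T z) powr (1 - b)\<close>, so \<open>T\<close> maps \<open>D\<close> into itself. In the \<open>\<ell>\<^sub>1\<close>-norm,
  \<open>y \<mapsto> \<P> y\<^sup>k\<^sup>-\<^sup>1\<close> is \<open>(k - 1) R\<^sup>k\<^sup>-\<^sup>2\<close>-Lipschitz on \<open>D\<close> (telescoping the products, using
  column substochasticity), and the rescaling \<open>z \<mapsto> (e\<^sup>T z) powr (- b) \<cdot> z\<close> is
  \<open>(1 + b)\<close>-Lipschitz where \<open>e\<^sup>T z \<ge> 1\<close> (convexity of \<open>t powr (- b)\<close>). Since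
  \<open>(1 + b)(k - 1) = 2k - 3\<close> and \<open>R\<^sup>k\<^sup>-\<^sup>2 = (1 - \<alpha>) powr (- b)\<close>, \<open>T\<close> is a contraction with
  constant \<open>\<varsigma>\<close> on the closed set \<open>D\<close>, and the contraction principle yields the limit and
  the rate. A fixed point solves the MLPPR system because \<open>(e\<^sup>T y)\<^sup>k\<^sup>-\<^sup>2 = (e\<^sup>T z) powr b\<close>
  exactly undoes the rescaling.\<close>

lemma abs_le_norm1: "\<bar>f i\<bar> \<le> norm1 (f :: 'n::finite \<Rightarrow> real)"
  unfolding norm1_def by (rule member_le_sum) auto

lemma norm1_nonneg: "0 \<le> norm1 f"
  unfolding norm1_def by (simp add: sum_nonneg)

lemma norm1_diff_commute: "norm1 (\<lambda>i. z i - u i) = norm1 (\<lambda>i. u i - z i)"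
  unfolding norm1_def by (simp add: abs_minus_commute)

lemma esum_diff_le_norm1: "esum z - esum u \<le> norm1 (\<lambda>i. z i - u i)"
  unfolding esum_def norm1_def by (simp add: sum_subtractf[symmetric] sum_mono)

lemma esum_nonneg: "(\<And>i. 0 \<le> y i) \<Longrightarrow> 0 \<le> esum y"
  unfolding esum_def by (simp add: sum_nonneg)

lemma sum_lists_length_Suc:
  "(\<Sum>xs\<in>{xs::'n::finite list. length xs = Suc m}. g xs) =
   (\<Sum>x\<in>UNIV. \<Sum>xs\<in>{xs. length xs = m}. g (x # xs))"
proof -
  have "{xs::'n list. length xs = Suc m} = (\<lambda>(x, xs). x # xs) ` (UNIV \<times> {xs. length xs = m})"
    by (auto simp: length_Suc_conv)
  moreover have "inj_on (\<lambda>(x, xs). x # xs) (UNIV \<times> {xs::'n list. length xs = m})"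
    by (auto simp: inj_on_def)
  ultimately show ?thesis
    by (simp add: sum.reindex sum.cartesian_product case_prod_unfold)
qed

lemma lists_length_0: "{xs. length xs = 0} = {[]}"
  by auto

lemma sum_lists_length_prod_list:
  "(\<Sum>xs\<in>{xs::'n::finite list. length xs = m}. prod_list (map y xs)) = esum y ^ m"
  by (induction m)
    (simp_all add: lists_length_0 sum_lists_length_Suc esum_def
      sum_distrib_left[symmetric] sum_distrib_right[symmetric])

lemma prod_list_map_nonneg: "(\<And>i. 0 \<le> y i) \<Longrightarrow> 0 \<le> prod_list (map (y :: 'a \<Rightarrow> real) xs)"
  by (rule prod_list_nonneg) auto

lemma sum_lists_length_prod_list_diff_le:
  fixes y w :: "'n::finite \<Rightarrow> real"
  assumes y: "\<And>i. 0 \<le> y i" and w: "\<And>i. 0 \<le> w i"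
    and ey: "esum y \<le> R" and ew: "esum w \<le> R"
  shows "(\<Sum>xs\<in>{xs::'n list. length xs = m}. \<bar>prod_list (map y xs) - prod_list (map w xs)\<bar>)
     \<le> real m * R ^ (m - 1) * norm1 (\<lambda>i. y i - w i)"
proof (induction m)
  case 0
  show ?case by (simp add: lists_length_0)
next
  case (Suc m)
  let ?N = "norm1 (\<lambda>i. y i - w i)"
  let ?D = "\<lambda>xs. \<bar>prod_list (map y xs) - prod_list (map w xs)\<bar>"
  have R: "0 \<le> R" using esum_nonneg[of w] w ew by fastforce
  have "(\<Sum>xs\<in>{xs::'n list. length xs = Suc m}. ?D xs)
      = (\<Sum>x\<in>UNIV. \<Sum>xs\<in>{xs. length xs = m}.
           \<bar>(y x - w x) * prod_list (map y xs) + w x * (prod_list (map y xs) - prod_list (map w xs))\<bar>)"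
    by (simp add: sum_lists_length_Suc algebra_simps)
  also have "\<dots> \<le> (\<Sum>x\<in>UNIV. \<Sum>xs\<in>{xs. length xs = m}.
           \<bar>y x - w x\<bar> * prod_list (map y xs) + w x * ?D xs)"
    by (intro sum_mono order.trans[OF abs_triangle_ineq])
      (simp add: abs_mult prod_list_map_nonneg[of y] y w)
  also have "\<dots> = ?N * esum y ^ m + esum w * (\<Sum>xs\<in>{xs. length xs = m}. ?D xs)"
    by (simp add: sum.distrib sum_distrib_left[symmetric] sum_distrib_right[symmetric]
        sum_lists_length_prod_list norm1_def esum_def)
  also have "\<dots> \<le> ?N * R ^ m + R * (real m * R ^ (m - 1) * ?N)"
    by (intro add_mono mult_left_mono power_mono mult_mono Suc.IH)
      (simp_all add: norm1_nonneg esum_nonneg y ey ew R sum_nonneg)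
  also have "\<dots> = real (Suc m) * R ^ (Suc m - 1) * ?N"
    by (cases m) (simp_all add: algebra_simps)
  finally show ?case .
qed

lemma tensor_apply_nonneg:
  assumes "colwise_substochastic P k" and "\<And>i. 0 \<le> y i"
  shows "0 \<le> tensor_apply P k y i"
  unfolding tensor_apply_def using assms
  by (intro sum_nonneg mult_nonneg_nonneg) (auto simp: colwise_substochastic_def prod_list_map_nonneg)

lemma esum_tensor_apply_le:
  fixes P :: "'n::finite \<Rightarrow> 'n list \<Rightarrow> real"
  assumes P: "colwise_substochastic P k" and y: "\<And>i. 0 \<le> y i"
  shows "esum (tensor_apply P k y) \<le> esum y ^ (k - 1)"
proof -
  have "esum (tensor_apply P k y)
      = (\<Sum>xs\<in>{xs::'n list. length xs = k - 1}. (\<Sum>i\<in>UNIV. P i xs) * prod_list (map y xs))"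
    unfolding esum_def tensor_apply_def by (simp add: sum.swap[of _ UNIV] sum_distrib_right)
  also have "\<dots> \<le> (\<Sum>xs\<in>{xs::'n list. length xs = k - 1}. prod_list (map y xs))"
    using P prod_list_map_nonneg[of y] y
    by (intro sum_mono) (auto simp: colwise_substochastic_def intro!: mult_left_le_one_le sum_nonneg)
  finally show ?thesis by (simp only: sum_lists_length_prod_list)
qed

lemma norm1_tensor_apply_diff_le:
  fixes P :: "'n::finite \<Rightarrow> 'n list \<Rightarrow> real"
  assumes P: "colwise_substochastic P k"
    and y: "\<And>i. 0 \<le> y i" and w: "\<And>i. 0 \<le> w i"
    and ey: "esum y \<le> R" and ew: "esum w \<le> R"
  shows "norm1 (\<lambda>i. tensor_apply P k y i - tensor_apply P k w i)
    \<le> real (k - 1) * R ^ (k - 2) * norm1 (\<lambda>i. y i - w i)"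
proof -
  let ?L = "{xs::'n list. length xs = k - 1}"
  let ?D = "\<lambda>xs. \<bar>prod_list (map y xs) - prod_list (map w xs)\<bar>"
  have P0: "xs \<in> ?L \<Longrightarrow> 0 \<le> P i xs" for i xs
    using P by (auto simp: colwise_substochastic_def)
  have "norm1 (\<lambda>i. tensor_apply P k y i - tensor_apply P k w i)
      = (\<Sum>i\<in>UNIV. \<bar>\<Sum>xs\<in>?L. P i xs * (prod_list (map y xs) - prod_list (map w xs))\<bar>)"
    unfolding norm1_def tensor_apply_def by (simp add: sum_subtractf[symmetric] algebra_simps)
  also have "\<dots> \<le> (\<Sum>i\<in>UNIV. \<Sum>xs\<in>?L. P i xs * ?D xs)"
    by (intro sum_mono order.trans[OF sum_abs]) (simp add: abs_mult P0)
  also have "\<dots> = (\<Sum>xs\<in>?L. (\<Sum>i\<in>UNIV. P i xs) * ?D xs)"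
    by (simp add: sum.swap[of _ UNIV] sum_distrib_right)
  also have "\<dots> \<le> (\<Sum>xs\<in>?L. ?D xs)"
    using P by (intro sum_mono) (auto simp: colwise_substochastic_def intro!: mult_left_le_one_le sum_nonneg)
  also have "\<dots> \<le> real (k - 1) * R ^ (k - 1 - 1) * norm1 (\<lambda>i. y i - w i)"
    by (rule sum_lists_length_prod_list_diff_le[where y = y and w = w, OF y w ey ew])
  finally show ?thesis by (simp add: diff_diff_add numeral_2_eq_2)
qed

definition scale_by_esum_powr :: "real \<Rightarrow> ('n::finite \<Rightarrow> real) \<Rightarrow> 'n \<Rightarrow> real"
  where "scale_by_esum_powr b z = (\<lambda>i. esum z powr (- b) * z i)"

lemma esum_scale_by_esum_powr:
  assumes "0 < esum z"
  shows "esum (scale_by_esum_powr b z) = esum z powr (1 - b)"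
proof -
  have "esum (scale_by_esum_powr b z) = esum z powr (- b) * esum z"
    by (simp add: scale_by_esum_powr_def esum_def sum_distrib_left)
  also have "\<dots> = esum z powr (- b) * esum z powr 1"
    using assms by simp
  also have "\<dots> = esum z powr (1 - b)"
    by (subst powr_add[symmetric]) simp
  finally show ?thesis .
qed

lemma powr_neg_ge_tangent:
  fixes x b :: real
  assumes "0 < x" "0 \<le> b"
  shows "1 - b * (x - 1) \<le> x powr (- b)"
proof -
  have "1 - b * (x - 1) \<le> 1 - b * ln x"
    using ln_le_minus_one[OF assms(1)] assms(2) by (simp add: mult_left_mono)
  also have "\<dots> \<le> exp (- b * ln x)"
    using exp_ge_add_one_self[of "- b * ln x"] by simp
  finally show ?thesis
    using assms(1) by (simp add: powr_def)
qed

lemma powr_neg_diff_le: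
  fixes s t b :: real
  assumes "1 \<le> t" "t \<le> s" "0 \<le> b"
  shows "t * (t powr (- b) - s powr (- b)) \<le> b * (s - t)"
proof -
  have t: "0 < t" using assms by simp
  have st: "(s / t) powr (- b) \<le> 1"
    using powr_mono2'[of "- b" 1 "s / t"] assms t by simp
  have "t * (t powr (- b) - s powr (- b)) = t powr (- b) * (t * (1 - (s / t) powr (- b)))"
    using t by (simp add: powr_divide algebra_simps)
  also have "\<dots> \<le> 1 * (t * (b * (s / t - 1)))"
    using powr_neg_ge_tangent[of "s / t" b] powr_mono2'[of "- b" 1 t] assms t st
    by (intro mult_mono mult_left_mono) auto
  also have "\<dots> = b * (s - t)"
    using t by (simp add: field_simps)
  finally show ?thesis .
qed

lemma norm1_scale_by_esum_powr_diff_le_ordered: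
  fixes z u :: "'n::finite \<Rightarrow> real"
  assumes u: "\<And>i. 0 \<le> u i" and t: "1 \<le> esum u" and ts: "esum u \<le> esum z" and b: "0 \<le> b"
  shows "norm1 (\<lambda>i. scale_by_esum_powr b z i - scale_by_esum_powr b u i)
    \<le> (1 + b) * norm1 (\<lambda>i. z i - u i)"
proof -
  let ?s = "esum z" and ?t = "esum u" and ?N = "norm1 (\<lambda>i. z i - u i)"
  have s: "?s powr (- b) \<le> 1"
    using powr_mono2'[of "- b" 1 ?s] t ts b by simp
  have st: "0 \<le> ?t powr (- b) - ?s powr (- b)"
    using powr_mono2'[of "- b" ?t ?s] t ts b by simp
  have "norm1 (\<lambda>i. scale_by_esum_powr b z i - scale_by_esum_powr b u i)
     = (\<Sum>i\<in>UNIV. \<bar>?s powr (- b) * (z i - u i) - (?t powr (- b) - ?s powr (- b)) * u i\<bar>)"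
    unfolding norm1_def scale_by_esum_powr_def by (simp add: algebra_simps)
  also have "\<dots> \<le> (\<Sum>i\<in>UNIV. ?s powr (- b) * \<bar>z i - u i\<bar> + (?t powr (- b) - ?s powr (- b)) * u i)"
    by (intro sum_mono order.trans[OF abs_triangle_ineq4]) (simp add: abs_mult abs_of_nonneg[OF st] u)
  also have "\<dots> = ?s powr (- b) * ?N + ?t * (?t powr (- b) - ?s powr (- b))"
    unfolding norm1_def esum_def
    by (simp add: sum.distrib sum_distrib_left[symmetric] sum_distrib_right[symmetric] mult.commute)
  also have "\<dots> \<le> 1 * ?N + b * (?s - ?t)"
    using powr_neg_diff_le[OF t ts b] s by (intro add_mono mult_right_mono) (simp_all add: norm1_nonneg)
  also have "\<dots> \<le> (1 + b) * ?N"
    using mult_left_mono[OF esum_diff_le_norm1[of z u] b] by (simp add: algebra_simps)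
  finally show ?thesis .
qed

lemma norm1_scale_by_esum_powr_diff_le:
  fixes z u :: "'n::finite \<Rightarrow> real"
  assumes "\<And>i. 0 \<le> z i" "\<And>i. 0 \<le> u i" "1 \<le> esum z" "1 \<le> esum u" "0 \<le> b"
  shows "norm1 (\<lambda>i. scale_by_esum_powr b z i - scale_by_esum_powr b u i)
    \<le> (1 + b) * norm1 (\<lambda>i. z i - u i)"
proof (cases "esum u \<le> esum z")
  case True
  then show ?thesis using norm1_scale_by_esum_powr_diff_le_ordered assms by blast
next
  case False
  then show ?thesis
    using norm1_scale_by_esum_powr_diff_le_ordered[of z u b] assms
    by (simp add: norm1_diff_commute[of z u] norm1_diff_commute[of "scale_by_esum_powr b z"])
qed

lemma tendsto_norm1_diff_zero:
  assumes "\<And>i. (\<lambda>c. x c i) \<longlonglongrightarrow> ys i"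
  shows "(\<lambda>c. norm1 (\<lambda>i. x c i - ys (i :: 'n::finite))) \<longlonglongrightarrow> 0"
proof -
  have "(\<lambda>c. \<Sum>i\<in>UNIV. \<bar>x c i - ys i\<bar>) \<longlonglongrightarrow> (\<Sum>i\<in>UNIV. \<bar>ys i - ys i\<bar>)"
    by (intro tendsto_sum tendsto_rabs tendsto_diff assms tendsto_const)
  then show ?thesis by (simp add: norm1_def)
qed

lemma tendsto_of_norm1_diff_zero:
  assumes "(\<lambda>c. norm1 (\<lambda>i. x c i - ys (i :: 'n::finite))) \<longlonglongrightarrow> 0"
  shows "(\<lambda>c. x c i) \<longlonglongrightarrow> ys i"
proof -
  have "(\<lambda>c. x c i - ys i) \<longlonglongrightarrow> 0"
  proof (rule Lim_null_comparison[OF always_eventually assms], intro allI)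
    fix c
    show "norm (x c i - ys i) \<le> norm1 (\<lambda>i. x c i - ys i)"
      using abs_le_norm1[of "\<lambda>i. x c i - ys i" i] by simp
  qed
  then show ?thesis by (simp add: LIM_zero_iff)
qed

lemma convergent_if_norm1_steps_geometric:
  fixes x :: "nat \<Rightarrow> 'n::finite \<Rightarrow> real"
  assumes steps: "\<And>c. norm1 (\<lambda>i. x (Suc c) i - x c i) \<le> q ^ c * d" and q: "0 \<le> q" "q < 1"
  shows "convergent (\<lambda>c. x c i)"
proof -
  have "summable (\<lambda>c. x (Suc c) i - x c i)"
  proof (rule summable_comparison_test)
    show "\<exists>N. \<forall>c\<ge>N. norm (x (Suc c) i - x c i) \<le> q ^ c * d"
    proof (intro exI allI impI)
      fix c
      show "norm (x (Suc c) i - x c i) \<le> q ^ c * d"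
        using abs_le_norm1[of "\<lambda>i. x (Suc c) i - x c i" i] steps[of c] by simp
    qed
    show "summable (\<lambda>c. q ^ c * d)"
      using q by (intro summable_mult2 summable_geometric) simp
  qed
  then have "(\<lambda>c. x 0 i + (\<Sum>j<c. x (Suc j) i - x j i))
      \<longlonglongrightarrow> x 0 i + (\<Sum>c. x (Suc c) i - x c i)"
    by (intro tendsto_add tendsto_const summable_LIMSEQ)
  then show ?thesis
    by (auto simp: convergent_def sum_lessThan_telescope[of "\<lambda>j. x j i"])
qed

text \<open>The library's \<open>Banach_fix\<close> needs a complete metric space, but the function type
  \<open>'n \<Rightarrow> real\<close> carries no \<open>\<ell>\<^sub>1\<close> metric; hence this coordinatewise version.\<close>

lemma contraction_iterates_converge:
  fixes T :: "('n::finite \<Rightarrow> real) \<Rightarrow> 'n \<Rightarrow> real" and x :: "nat \<Rightarrow> 'n \<Rightarrow> real"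
  assumes closed: "\<And>z ys. (\<And>c. z c \<in> D) \<Longrightarrow> (\<And>i. (\<lambda>c. z c i) \<longlonglongrightarrow> ys i) \<Longrightarrow> ys \<in> D"
    and maps_into: "\<And>u. u \<in> D \<Longrightarrow> T u \<in> D"
    and contraction: "\<And>u w. u \<in> D \<Longrightarrow> w \<in> D \<Longrightarrow>
      norm1 (\<lambda>i. T u i - T w i) \<le> q * norm1 (\<lambda>i. u i - w i)"
    and q: "0 \<le> q" "q < 1"
    and x0: "x 0 \<in> D" and iter: "\<And>c. x (Suc c) = T (x c)"
  shows "\<exists>ys\<in>D. T ys = ys \<and> (\<forall>i. (\<lambda>c. x c i) \<longlonglongrightarrow> ys i) \<and>
    (\<forall>c. norm1 (\<lambda>i. x c i - ys i) \<le> q ^ c * norm1 (\<lambda>i. x 0 i - ys i))"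
proof -
  have xD: "x c \<in> D" for c
    by (induction c) (simp_all add: x0 iter maps_into)
  have step_contraction: "norm1 (\<lambda>i. x (Suc c) i - T w i) \<le> q * norm1 (\<lambda>i. x c i - w i)"
    if "w \<in> D" for c w
    using contraction[OF xD[of c] that] by (simp add: iter)
  have steps: "norm1 (\<lambda>i. x (Suc c) i - x c i) \<le> q ^ c * norm1 (\<lambda>i. x 1 i - x 0 i)" for c
  proof (induction c)
    case (Suc c)
    have "norm1 (\<lambda>i. x (Suc (Suc c)) i - x (Suc c) i) \<le> q * norm1 (\<lambda>i. x (Suc c) i - x c i)"
      using step_contraction[where c = "Suc c" and w = "x c", OF xD] by (simp only: iter[of c, symmetric])
    also have "\<dots> \<le> q * (q ^ c * norm1 (\<lambda>i. x 1 i - x 0 i))"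
      using Suc.IH q by (simp add: mult_left_mono)
    finally show ?case by simp
  qed simp
  define ys where "ys i = lim (\<lambda>c. x c i)" for i
  have lim: "(\<lambda>c. x c i) \<longlonglongrightarrow> ys i" for i
    unfolding ys_def convergent_LIMSEQ_iff[symmetric]
    by (rule convergent_if_norm1_steps_geometric[where x = x, OF steps q])
  have ysD: "ys \<in> D"
    using xD lim by (rule closed)
  have fixpoint: "T ys = ys"
  proof (rule ext)
    fix i
    have "(\<lambda>c. norm1 (\<lambda>i. x (Suc c) i - T ys i)) \<longlonglongrightarrow> 0"
    proof (rule Lim_null_comparison[OF always_eventually])
      show "\<forall>c. norm (norm1 (\<lambda>i. x (Suc c) i - T ys i)) \<le> q * norm1 (\<lambda>i. x c i - ys i)"
        using step_contraction[OF ysD] by (simp add: norm1_nonneg)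
      show "(\<lambda>c. q * norm1 (\<lambda>i. x c i - ys i)) \<longlonglongrightarrow> 0"
        using tendsto_mult_right_zero[OF tendsto_norm1_diff_zero[where x = x and ys = ys, OF lim]] .
    qed
    then have "(\<lambda>c. x (Suc c) i) \<longlonglongrightarrow> T ys i"
      by (rule tendsto_of_norm1_diff_zero)
    then show "T ys i = ys i"
      by (rule LIMSEQ_unique[OF _ LIMSEQ_Suc[OF lim[of i]]])
  qed
  have rate: "norm1 (\<lambda>i. x c i - ys i) \<le> q ^ c * norm1 (\<lambda>i. x 0 i - ys i)" for c
  proof (induction c)
    case (Suc c)
    have "norm1 (\<lambda>i. x (Suc c) i - ys i) \<le> q * norm1 (\<lambda>i. x c i - ys i)"
      using step_contraction[OF ysD] fixpoint by simp
    also have "\<dots> \<le> q * (q ^ c * norm1 (\<lambda>i. x 0 i - ys i))"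
      using Suc.IH q by (simp add: mult_left_mono)
    finally show ?case by simp
  qed simp
  show ?thesis
    using ysD fixpoint lim rate by (intro bexI[of _ ys] conjI allI)
qed

definition nonneg_esum_atMost :: "real \<Rightarrow> ('n::finite \<Rightarrow> real) set"
  where "nonneg_esum_atMost R = {y. (\<forall>i. 0 \<le> y i) \<and> esum y \<le> R}"

lemma nonneg_esum_atMost_closed:
  assumes "\<And>c. z c \<in> nonneg_esum_atMost R" and lim: "\<And>i. (\<lambda>c. z c i) \<longlonglongrightarrow> ys i"
  shows "ys \<in> nonneg_esum_atMost R"
proof -
  have z: "0 \<le> z c i" "esum (z c) \<le> R" for c i
    using assms(1)[of c] by (auto simp: nonneg_esum_atMost_def)
  have "0 \<le> ys i" for i
    using z(1) by (intro LIMSEQ_le_const[OF lim[of i]]) auto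
  moreover have "(\<lambda>c. esum (z c)) \<longlonglongrightarrow> esum ys"
    unfolding esum_def by (intro tendsto_sum lim)
  then have "esum ys \<le> R"
    using z(2) by (intro LIMSEQ_le_const2) auto
  ultimately show ?thesis
    by (simp add: nonneg_esum_atMost_def)
qed

definition splitting_rhs ::
    "('n::finite \<Rightarrow> 'n list \<Rightarrow> real) \<Rightarrow> nat \<Rightarrow> real \<Rightarrow> ('n \<Rightarrow> real) \<Rightarrow> ('n \<Rightarrow> real) \<Rightarrow> 'n \<Rightarrow> real"
  where "splitting_rhs P k \<alpha> v y = (\<lambda>i. \<alpha> * tensor_apply P k y i + v i)"

definition splitting_step ::
    "('n::finite \<Rightarrow> 'n list \<Rightarrow> real) \<Rightarrow> nat \<Rightarrow> real \<Rightarrow> ('n \<Rightarrow> real) \<Rightarrow> ('n \<Rightarrow> real) \<Rightarrow> 'n \<Rightarrow> real"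
  where "splitting_step P k \<alpha> v y =
    scale_by_esum_powr ((real k - 2) / (real k - 1)) (splitting_rhs P k \<alpha> v y)"

definition splitting_radius :: "real \<Rightarrow> nat \<Rightarrow> real"
  where "splitting_radius \<alpha> k = (1 - \<alpha>) powr (- (1 / (real k - 1)))"

context
  fixes P :: "'n::finite \<Rightarrow> 'n list \<Rightarrow> real" and k :: nat and \<alpha> :: real and v :: "'n \<Rightarrow> real"
  assumes k: "2 \<le> k" and P: "colwise_substochastic P k" and v: "stochastic_vec v"
    and \<alpha>: "0 \<le> \<alpha>" "\<alpha> < 1"
begin

lemma splitting_radius_power: "splitting_radius \<alpha> k ^ m = (1 - \<alpha>) powr (- (real m / (real k - 1)))"
proof -
  have "splitting_radius \<alpha> k ^ m = (1 - \<alpha>) powr (real m * - (1 / (real k - 1)))"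
    unfolding splitting_radius_def using \<alpha> by (intro powr_power) simp
  then show ?thesis by simp
qed

lemma splitting_rhs_nonneg: "(\<And>i. 0 \<le> y i) \<Longrightarrow> 0 \<le> splitting_rhs P k \<alpha> v y i"
  using tensor_apply_nonneg[OF P, of y] v \<alpha> by (simp add: splitting_rhs_def stochastic_vec_def)

lemma esum_splitting_rhs: "esum (splitting_rhs P k \<alpha> v y) = \<alpha> * esum (tensor_apply P k y) + 1"
  using v by (simp add: splitting_rhs_def esum_def stochastic_vec_def sum.distrib sum_distrib_left)

lemma one_le_esum_splitting_rhs: "(\<And>i. 0 \<le> y i) \<Longrightarrow> 1 \<le> esum (splitting_rhs P k \<alpha> v y)"
  using esum_nonneg[of "tensor_apply P k y"] tensor_apply_nonneg[OF P, of y] \<alpha>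
  by (simp add: esum_splitting_rhs)

lemma esum_splitting_rhs_le:
  assumes y: "y \<in> nonneg_esum_atMost (splitting_radius \<alpha> k)"
  shows "esum (splitting_rhs P k \<alpha> v y) \<le> 1 / (1 - \<alpha>)"
proof -
  have y0: "0 \<le> y i" and ey: "esum y \<le> splitting_radius \<alpha> k" for i
    using y by (auto simp: nonneg_esum_atMost_def)
  have "esum (tensor_apply P k y) \<le> esum y ^ (k - 1)"
    using P y0 by (rule esum_tensor_apply_le)
  also have "\<dots> \<le> splitting_radius \<alpha> k ^ (k - 1)"
    by (rule power_mono[OF ey]) (simp add: esum_nonneg y0)
  also have "\<dots> = 1 / (1 - \<alpha>)"
    using k \<alpha> by (simp add: splitting_radius_power of_nat_diff powr_neg_one)
  finally have "\<alpha> * esum (tensor_apply P k y) \<le> \<alpha> * (1 / (1 - \<alpha>))"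
    using \<alpha>(1) by (rule mult_left_mono)
  moreover have "\<alpha> * (1 / (1 - \<alpha>)) + 1 = 1 / (1 - \<alpha>)"
    using \<alpha> by (simp add: field_simps)
  ultimately show ?thesis
    by (simp add: esum_splitting_rhs)
qed

lemma splitting_step_maps_into:
  assumes y: "y \<in> nonneg_esum_atMost (splitting_radius \<alpha> k)"
  shows "splitting_step P k \<alpha> v y \<in> nonneg_esum_atMost (splitting_radius \<alpha> k)"
proof -
  let ?z = "splitting_rhs P k \<alpha> v y"
  have y0: "0 \<le> y i" for i
    using y by (simp add: nonneg_esum_atMost_def)
  have z: "1 \<le> esum ?z" "esum ?z \<le> 1 / (1 - \<alpha>)"
    using one_le_esum_splitting_rhs[of y] y0 esum_splitting_rhs_le[OF y] by auto
  have "esum (splitting_step P k \<alpha> v y) = esum ?z powr (1 / (real k - 1))"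
    using z k by (simp add: splitting_step_def esum_scale_by_esum_powr field_simps)
  also have "\<dots> \<le> (1 / (1 - \<alpha>)) powr (1 / (real k - 1))"
    using z k by (intro powr_mono2) auto
  also have "\<dots> = splitting_radius \<alpha> k"
    by (simp add: splitting_radius_def powr_divide powr_minus_divide)
  finally show ?thesis
    using splitting_rhs_nonneg[of y] y0
    by (simp add: nonneg_esum_atMost_def splitting_step_def scale_by_esum_powr_def)
qed

lemma splitting_step_contraction:
  assumes y: "y \<in> nonneg_esum_atMost (splitting_radius \<alpha> k)"
    and w: "w \<in> nonneg_esum_atMost (splitting_radius \<alpha> k)"
  shows "norm1 (\<lambda>i. splitting_step P k \<alpha> v y i - splitting_step P k \<alpha> v w i)
    \<le> (2 * real k - 3) * \<alpha> * (1 - \<alpha>) powr (- ((real k - 2) / (real k - 1))) * norm1 (\<lambda>i. y i - w i)"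
proof -
  let ?b = "(real k - 2) / (real k - 1)" and ?R = "splitting_radius \<alpha> k"
  let ?N = "norm1 (\<lambda>i. y i - w i)"
  have y0: "0 \<le> y i" "esum y \<le> ?R" and w0: "0 \<le> w i" "esum w \<le> ?R" for i
    using y w by (auto simp: nonneg_esum_atMost_def)
  have "norm1 (\<lambda>i. splitting_step P k \<alpha> v y i - splitting_step P k \<alpha> v w i)
      \<le> (1 + ?b) * norm1 (\<lambda>i. splitting_rhs P k \<alpha> v y i - splitting_rhs P k \<alpha> v w i)"
    unfolding splitting_step_def using k y0 w0
    by (intro norm1_scale_by_esum_powr_diff_le splitting_rhs_nonneg one_le_esum_splitting_rhs) auto
  also have "norm1 (\<lambda>i. splitting_rhs P k \<alpha> v y i - splitting_rhs P k \<alpha> v w i)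
      = \<alpha> * norm1 (\<lambda>i. tensor_apply P k y i - tensor_apply P k w i)"
    using \<alpha> by (simp add: splitting_rhs_def norm1_def sum_distrib_left abs_mult right_diff_distrib[symmetric])
  also have "(1 + ?b) * (\<alpha> * norm1 (\<lambda>i. tensor_apply P k y i - tensor_apply P k w i))
      \<le> (1 + ?b) * (\<alpha> * (real (k - 1) * ?R ^ (k - 2) * ?N))"
    using norm1_tensor_apply_diff_le[OF P, of y w ?R] y0 w0 k \<alpha>
    by (intro mult_left_mono[where c = "1 + ?b"] mult_left_mono[where c = \<alpha>]) auto
  also have "\<dots> = ((1 + ?b) * real (k - 1)) * \<alpha> * ?R ^ (k - 2) * ?N"
    by (simp add: algebra_simps)
  also have "(1 + ?b) * real (k - 1) = 2 * real k - 3"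
    using k by (simp add: of_nat_diff field_simps)
  also have "?R ^ (k - 2) = (1 - \<alpha>) powr (- ?b)"
    using k by (simp add: splitting_radius_power of_nat_diff)
  finally show ?thesis .
qed

lemma splitting_step_fixpoint_solves:
  assumes ys: "\<And>i. 0 \<le> ys i" and fixpoint: "splitting_step P k \<alpha> v ys = ys"
  shows "esum ys ^ (k - 2) * ys i - \<alpha> * tensor_apply P k ys i = v i"
proof -
  let ?z = "splitting_rhs P k \<alpha> v ys" and ?b = "(real k - 2) / (real k - 1)"
  have s: "0 < esum ?z"
    using one_le_esum_splitting_rhs[of ys] ys by fastforce
  have ys_eq: "ys = scale_by_esum_powr ?b ?z"
    using fixpoint unfolding splitting_step_def by (rule sym)
  have "esum ys ^ (k - 2) = (esum ?z powr (1 - ?b)) ^ (k - 2)"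
    using esum_scale_by_esum_powr[OF s, of ?b] ys_eq[symmetric] by simp
  also have "\<dots> = esum ?z powr (real (k - 2) * (1 - ?b))"
    using s by (intro powr_power) simp
  also have "real (k - 2) * (1 - ?b) = ?b"
    using k by (simp add: of_nat_diff field_simps)
  finally have "esum ys ^ (k - 2) * ys i = esum ?z powr ?b * (esum ?z powr (- ?b) * ?z i)"
    using fun_cong[OF ys_eq, of i] by (simp only: scale_by_esum_powr_def)
  also have "\<dots> = ?z i"
    using s by (simp add: powr_minus)
  finally show ?thesis
    by (simp add: splitting_rhs_def)
qed

end

theorem theorem4p2:
  fixes P :: "'n::finite \<Rightarrow> 'n list \<Rightarrow> real"
    and v :: "'n \<Rightarrow> real"
    and y :: "nat \<Rightarrow> 'n \<Rightarrow> real"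
    and k :: nat and \<alpha> :: real
  assumes k: "k \<ge> 2"
    and P: "colwise_substochastic P k"
    and v: "stochastic_vec v"
    and alpha: "0 \<le> \<alpha>" "\<alpha> < 1"
    and varsigma: "(2 * real k - 3) * \<alpha> * (1 - \<alpha>) powr (- ((real k - 2) / (real k - 1))) < 1"
    and y0_nonneg: "\<forall>i. 0 \<le> y 0 i"
    and y0_sum: "esum (y 0) \<le> (1 - \<alpha>) powr (- (1 / (real k - 1)))"
    and iter: "\<And>c. y (Suc c) =
       (let z = (\<lambda>i. \<alpha> * tensor_apply P k (y c) i + v i)
        in (\<lambda>i. esum z powr (- ((real k - 2) / (real k - 1))) * z i))"
  shows "\<exists>ys :: 'n \<Rightarrow> real.
     (\<forall>i. 0 \<le> ys i) \<and>
     (\<forall>i. esum ys ^ (k - 2) * ys i - \<alpha> * tensor_apply P k ys i = v i) \<and>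
     (\<forall>i. (\<lambda>c. y c i) \<longlonglongrightarrow> ys i) \<and>
     (\<forall>c. norm1 (\<lambda>i. y c i - ys i) \<le>
        ((2 * real k - 3) * \<alpha> * (1 - \<alpha>) powr (- ((real k - 2) / (real k - 1)))) ^ c
          * norm1 (\<lambda>i. y 0 i - ys i))"
proof -
  let ?D = "nonneg_esum_atMost (splitting_radius \<alpha> k)"
  let ?q = "(2 * real k - 3) * \<alpha> * (1 - \<alpha>) powr (- ((real k - 2) / (real k - 1)))"
  have "\<exists>ys\<in>?D. splitting_step P k \<alpha> v ys = ys \<and> (\<forall>i. (\<lambda>c. y c i) \<longlonglongrightarrow> ys i) \<and>
    (\<forall>c. norm1 (\<lambda>i. y c i - ys i) \<le> ?q ^ c * norm1 (\<lambda>i. y 0 i - ys i))"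
  proof (rule contraction_iterates_converge)
    show "\<And>z ys. (\<And>c. z c \<in> ?D) \<Longrightarrow> (\<And>i. (\<lambda>c. z c i) \<longlonglongrightarrow> ys i) \<Longrightarrow> ys \<in> ?D"
      by (rule nonneg_esum_atMost_closed)
    show "\<And>u. u \<in> ?D \<Longrightarrow> splitting_step P k \<alpha> v u \<in> ?D"
      by (rule splitting_step_maps_into[OF k P v alpha])
    show "\<And>u w. u \<in> ?D \<Longrightarrow> w \<in> ?D \<Longrightarrow>
        norm1 (\<lambda>i. splitting_step P k \<alpha> v u i - splitting_step P k \<alpha> v w i) \<le> ?q * norm1 (\<lambda>i. u i - w i)"
      by (rule splitting_step_contraction[OF k P v alpha])
    show "0 \<le> ?q" "?q < 1"
      using k alpha varsigma by auto
    show "y 0 \<in> ?D"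
      using y0_nonneg y0_sum by (simp add: nonneg_esum_atMost_def splitting_radius_def)
    show "\<And>c. y (Suc c) = splitting_step P k \<alpha> v (y c)"
      by (simp add: iter splitting_step_def splitting_rhs_def scale_by_esum_powr_def)
  qed
  then obtain ys where ys: "ys \<in> ?D" "splitting_step P k \<alpha> v ys = ys"
    and lim_rate: "\<forall>i. (\<lambda>c. y c i) \<longlonglongrightarrow> ys i" "\<forall>c. norm1 (\<lambda>i. y c i - ys i) \<le> ?q ^ c * norm1 (\<lambda>i. y 0 i - ys i)"
    by blast
  have "\<forall>i. 0 \<le> ys i"
    using ys(1) by (simp add: nonneg_esum_atMost_def)
  moreover have "\<forall>i. esum ys ^ (k - 2) * ys i - \<alpha> * tensor_apply P k ys i = v i"
    using splitting_step_fixpoint_solves[OF k P v alpha, of ys] ys(2) calculation by blast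
  ultimately show ?thesis
    using lim_rate by blast
qed

end
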